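(* Let $(\mu_n)$ be an SI-martingale on $\mathbb{R}^d$ which is either of $(\mathcal{F},\tau,\zeta)$-cutout type or of $(\mathcal{F},\tau,\zeta)$-cell type. Let $(\mathcal{M},\nu)$ be a metric measure space, let $\{\Pi_t:\mathcal{M}\to\mathbb{R}^d\}_{t\in\Gamma}$ be a family of Borel maps parametrized by a metric space $(\Gamma,d)$, and set $\eta_t=\Pi_t\nu$ (push-forward). Suppose there are constants $0<\gamma_0,C<\infty$ such that $$\nu\big(\Pi_t^{-1}(\Lambda)\,\Delta\,\Pi_u^{-1}(\Lambda)\big)\le C\, d(t,u)^{\gamma_0}\quad\text{for all }\Lambda\in\mathcal{F},\ t,u\in\Gamma .$$ Then $$\sup_{t\neq u\in\Gamma,\ n\ge N_0}\frac{\left|\int\mu_n\,d\eta_t-\int\mu_n\,d\eta_u\right|}{2^{(\tau+\zeta)n}\,d(t,u)^{\gamma_0}}\le C'<\infty,$$ where $C'$ is a deterministic constant and $N_0$ is the random variable appearing in the definition of cutout type (respectively cell type).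
   Context: An SI-martingale on $\mathbb{R}^d$ is a sequence $(\mu_n)_{n\ge0}$ of random functions $\mu_n:\mathbb{R}^d\to[0,\infty)$ (identified with the measures $\mu_n(x)\,dx$) such that: (SI1) $\mu_0$ is a deterministic bounded function with bounded support; (SI2) there is an increasing filtration $(\mathcal{B}_n)$ with $\mu_n$ $\mathcal{B}_n$-measurable and $\mathbb{E}(\mu_{n+1}(x)\mid\mathcal{B}_n)=\mu_n(x)$ for all $x\in\mathbb{R}^d$, $n\in\mathbb{N}$; (SI3) there is $C<\infty$ with $\mu_{n+1}(x)\le C\mu_n(x)$ for all $x,n$; (SI4) there is $C<\infty$ such that for any $(C2^{-n})$-separated family $\mathcal{Q}$ of half-open dyadic cubes of side length $2^{-(n+1)}$, the restrictions $\{\mu_{n+1}|_Q\}_{Q\in\mathcal{Q}}$ are independent conditionally on $\mathcal{B}_n$. Let $\mathcal{F}$ be a family of Borel subsets of a fixed ball $B(0,R)\subset\mathbb{R}^d$, and $\tau,\zeta>0$. $(\mu_n)$ is of $(\mathcal{F},\tau,\zeta)$-cutout type if there are $C>0$ and a set $\Omega\in\mathcal{F}$ such that $\mu_n=2^{\tau n}\mathbf{1}_{A_n}$ with $A_n=\Omega\setminus\bigcup_{j=1}^{M_n}\Lambda^{(n)}_j$ for a random finite subfamily $\{\Lambda^{(n)}_j\}_{j=1}^{M_n}$ of $\mathcal{F}$, and there is an a.s. finite random variable $N_0$ with $M_n\le C2^{\zeta n}$ for all $n\ge N_0$. $(\mu_n)$ is of $(\mathcal{F},\tau,\zeta)$-cell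 type if there is $C>0$ such that $\mu_n=\sum_{j=1}^{M_n}c^{(n)}_j\mathbf{1}[F^{(n)}_j]$, where $\{F^{(n)}_j\}_{j=1}^{M_n}$ is a random subfamily of $\mathcal{F}$, the random variables satisfy $0\le c^{(n)}_j\le C2^{\tau n}$ for all $j,n$ a.s., and a.s. there is $N_0$ with $M_n\le C2^{\zeta n}$ for all $n\ge N_0$. $A\Delta B$ denotes symmetric difference. *)

theory Defs
  imports "HOL-Probability.Probability"
begin

definition dyadic_cube :: "nat \<Rightarrow> ('a::euclidean_space \<Rightarrow> int) \<Rightarrow> 'a set" where
  "dyadic_cube m k = {x. \<forall>i\<in>Basis. real_of_int (k i) / 2 ^ m \<le> x \<bullet> i
                              \<and> x \<bullet> i < (real_of_int (k i) + 1) / 2 ^ m}"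

definition dyadic_cubes :: "nat \<Rightarrow> 'a::euclidean_space set set" where
  "dyadic_cubes m = {dyadic_cube m k | k. True}"

definition separated_family :: "real \<Rightarrow> 'a::metric_space set set \<Rightarrow> bool" where
  "separated_family r Q \<longleftrightarrow> (\<forall>Q1\<in>Q. \<forall>Q2\<in>Q. Q1 \<noteq> Q2 \<longrightarrow> r \<le> setdist Q1 Q2)"

definition restr_sigma :: "'w measure \<Rightarrow> ('a \<Rightarrow> 'w \<Rightarrow> real) \<Rightarrow> 'a set \<Rightarrow> 'w set set" where
  "restr_sigma M f Q = sigma_sets (space M) {f x -` A \<inter> space M | x A. x \<in> Q \<and> A \<in> sets borel}"

definition cond_indep_family ::
  "'w measure \<Rightarrow> 'w measure \<Rightarrow> ('i \<Rightarrow> 'w set set) \<Rightarrow> 'i set \<Rightarrow> bool" where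
  "cond_indep_family M F S I \<longleftrightarrow>
     (\<forall>J. J \<subseteq> I \<longrightarrow> finite J \<longrightarrow> J \<noteq> {} \<longrightarrow>
       (\<forall>A. (\<forall>j\<in>J. A j \<in> S j) \<longrightarrow>
          (AE \<omega> in M. real_cond_exp M F (indicator (\<Inter>j\<in>J. A j)) \<omega>
                   = (\<Prod>j\<in>J. real_cond_exp M F (indicator (A j)) \<omega>))))"

definition SI_martingale ::
  "'w measure \<Rightarrow> (nat \<Rightarrow> 'w measure) \<Rightarrow> (nat \<Rightarrow> 'w \<Rightarrow> 'a::euclidean_space \<Rightarrow> real) \<Rightarrow> bool" where
  "SI_martingale M B mu \<longleftrightarrow>
     prob_space M \<and>
     (\<forall>n \<omega> x. \<omega> \<in> space M \<longrightarrow> 0 \<le> mu n \<omega> x) \<and>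
     \<comment> \<open>SI1\<close>
     (\<exists>f. (\<forall>\<omega>\<in>space M. mu 0 \<omega> = f) \<and> (\<exists>b. \<forall>x. \<bar>f x\<bar> \<le> b) \<and> bounded {x. f x \<noteq> 0}) \<and>
     \<comment> \<open>SI2\<close>
     (\<forall>n. subalgebra M (B n)) \<and> (\<forall>n m. n \<le> m \<longrightarrow> sets (B n) \<subseteq> sets (B m)) \<and>
     (\<forall>n x. (\<lambda>\<omega>. mu n \<omega> x) \<in> borel_measurable (B n)) \<and>
     (\<forall>n x. AE \<omega> in M. real_cond_exp M (B n) (\<lambda>\<omega>. mu (Suc n) \<omega> x) \<omega> = mu n \<omega> x) \<and>
     \<comment> \<open>SI3\<close>
     (\<exists>C. \<forall>n \<omega> x. \<omega> \<in> space M \<longrightarrow> mu (Suc n) \<omega> x \<le> C * mu n \<omega> x) \<and>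
     \<comment> \<open>SI4\<close>
     (\<exists>C. \<forall>n Q. Q \<subseteq> dyadic_cubes (Suc n) \<longrightarrow> separated_family (C / 2 ^ n) Q \<longrightarrow>
         cond_indep_family M (B n) (\<lambda>Q. restr_sigma M (\<lambda>x \<omega>. mu (Suc n) \<omega> x) Q) Q)"

definition cutout_type ::
  "'w measure \<Rightarrow> 'a set set \<Rightarrow> real \<Rightarrow> real \<Rightarrow> (nat \<Rightarrow> 'w \<Rightarrow> 'a \<Rightarrow> real) \<Rightarrow> ('w \<Rightarrow> nat) \<Rightarrow> bool" where
  "cutout_type M F \<tau> \<zeta> mu N0 \<longleftrightarrow>
     N0 \<in> measurable M (count_space UNIV) \<and>
     (\<exists>C>0. \<exists>\<Omega>\<in>F. \<exists>(Lam :: nat \<Rightarrow> 'w \<Rightarrow> nat \<Rightarrow> 'a set) (Mn :: nat \<Rightarrow> 'w \<Rightarrow> nat).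
        (\<forall>n. \<forall>\<omega>\<in>space M. (\<forall>j\<in>{1..Mn n \<omega>}. Lam n \<omega> j \<in> F) \<and>
              mu n \<omega> = (\<lambda>x. 2 powr (\<tau> * real n) *
                 indicator (\<Omega> - (\<Union>j\<in>{1..Mn n \<omega>}. Lam n \<omega> j)) x)) \<and>
        (AE \<omega> in M. \<forall>n\<ge>N0 \<omega>. real (Mn n \<omega>) \<le> C * 2 powr (\<zeta> * real n)))"

definition cell_type ::
  "'w measure \<Rightarrow> 'a set set \<Rightarrow> real \<Rightarrow> real \<Rightarrow> (nat \<Rightarrow> 'w \<Rightarrow> 'a \<Rightarrow> real) \<Rightarrow> ('w \<Rightarrow> nat) \<Rightarrow> bool" where
  "cell_type M F \<tau> \<zeta> mu N0 \<longleftrightarrow>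
     (\<exists>C>0. \<exists>(Fm :: nat \<Rightarrow> 'w \<Rightarrow> nat \<Rightarrow> 'a set) (c :: nat \<Rightarrow> 'w \<Rightarrow> nat \<Rightarrow> real) (Mn :: nat \<Rightarrow> 'w \<Rightarrow> nat).
        (\<forall>n. \<forall>\<omega>\<in>space M. (\<forall>j\<in>{1..Mn n \<omega>}. Fm n \<omega> j \<in> F) \<and>
              mu n \<omega> = (\<lambda>x. \<Sum>j\<in>{1..Mn n \<omega>}. c n \<omega> j * indicator (Fm n \<omega> j) x)) \<and>
        (AE \<omega> in M. \<forall>n j. 0 \<le> c n \<omega> j \<and> c n \<omega> j \<le> C * 2 powr (\<tau> * real n)) \<and>
        (AE \<omega> in M. \<forall>n\<ge>N0 \<omega>. real (Mn n \<omega>) \<le> C * 2 powr (\<zeta> * real n)))"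

end

theory Submission
  imports Defs
begin

text \<open>Integrating a weighted sum of indicators of sets of
  \<open>F\<close> against a push-forward measure gives the same sum of \<open>\<nu>\<close>-measures of preimages, and
  the difference of \<open>\<nu>(\<Pi>\<^sub>t\<^sup>-\<^sup>1 \<Lambda>)\<close> and \<open>\<nu>(\<Pi>\<^sub>u\<^sup>-\<^sup>1 \<Lambda>)\<close> is at most the measure of the symmetric
  difference of the preimages. A cutout set \<open>\<Omega> - \<Union>\<^sub>j \<Lambda>\<^sub>j\<close> has its preimage symmetric difference
  covered by those of \<open>\<Omega>\<close> and the \<open>\<Lambda>\<^sub>j\<close>. Hence each of the at most \<open>C 2\<^sup>\<zeta>\<^sup>n\<close> sets contributes at
  most \<open>C 2\<^sup>\<tau>\<^sup>n d(t,u)\<^sup>\<gamma>\<^sup>0\<close> to the difference of the integrals.\<close>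

definition preimage_symdiff :: "'m measure \<Rightarrow> ('m \<Rightarrow> 'a) \<Rightarrow> ('m \<Rightarrow> 'a) \<Rightarrow> 'a set \<Rightarrow> 'm set" where
  "preimage_symdiff \<nu> P Q S = (P -` S \<inter> space \<nu> - Q -` S) \<union> (Q -` S \<inter> space \<nu> - P -` S)"

lemma preimage_symdiff_eq_sym_diff:
  "preimage_symdiff \<nu> P Q S = sym_diff (P -` S \<inter> space \<nu>) (Q -` S \<inter> space \<nu>)"
  unfolding preimage_symdiff_def by blast

lemma sets_preimage_symdiff:
  assumes "P \<in> borel_measurable \<nu>" "Q \<in> borel_measurable \<nu>" "S \<in> sets borel"
  shows "preimage_symdiff \<nu> P Q S \<in> sets \<nu>"
  using assms measurable_sets unfolding preimage_symdiff_eq_sym_diff by blast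

lemma (in finite_measure) abs_measure_diff_le_measure_symdiff:
  assumes "A \<in> sets M" "B \<in> sets M"
  shows "\<bar>measure M A - measure M B\<bar> \<le> measure M (sym_diff A B)"
proof -
  have "measure M A - measure M B \<le> measure M (A - B)" "measure M B - measure M A \<le> measure M (B - A)"
    using assms finite_measure_Diff'[of A B] finite_measure_Diff'[of B A]
      finite_measure_mono[of "A \<inter> B" B] finite_measure_mono[of "B \<inter> A" A] by auto
  moreover have "measure M (A - B) \<le> measure M (sym_diff A B)" "measure M (B - A) \<le> measure M (sym_diff A B)"
    using assms by (auto intro!: finite_measure_mono)
  ultimately show ?thesis
    by linarith
qed

lemma integral_distr_indicator:
  assumes "P \<in> borel_measurable \<nu>" "S \<in> sets borel"
  shows "integral\<^sup>L (distr \<nu> borel P) (indicator S) = measure \<nu> (P -` S \<inter> space \<nu>)"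
  using assms by (simp add: measure_distr)

lemma abs_integral_distr_indicator_diff_le:
  assumes "finite_measure \<nu>" "P \<in> borel_measurable \<nu>" "Q \<in> borel_measurable \<nu>" "S \<in> sets borel"
  shows "\<bar>integral\<^sup>L (distr \<nu> borel P) (indicator S) - integral\<^sup>L (distr \<nu> borel Q) (indicator S)\<bar>
    \<le> measure \<nu> (preimage_symdiff \<nu> P Q S)"
  unfolding integral_distr_indicator[OF assms(2,4)] integral_distr_indicator[OF assms(3,4)]
    preimage_symdiff_eq_sym_diff
  using assms measurable_sets by (metis finite_measure.abs_measure_diff_le_measure_symdiff)

lemma integral_distr_weighted_indicators:
  fixes c :: "'i \<Rightarrow> real"
  assumes "finite_measure \<nu>" "P \<in> borel_measurable \<nu>" "\<And>j. j \<in> J \<Longrightarrow> F j \<in> sets borel"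
  shows "integral\<^sup>L (distr \<nu> borel P) (\<lambda>x. \<Sum>j\<in>J. c j * indicator (F j) x)
    = (\<Sum>j\<in>J. c j * measure \<nu> (P -` F j \<inter> space \<nu>))"
proof -
  interpret \<eta>: finite_measure "distr \<nu> borel P"
    using assms by (intro finite_measure.finite_measure_distr)
  have "integrable (distr \<nu> borel P) (\<lambda>x. c j * indicator (F j) x)" if "j \<in> J" for j
    using assms(3)[OF that] \<eta>.emeasure_finite[of "F j"]
    by (intro integrable_mult_right integrable_real_indicator) (simp_all add: less_top[symmetric])
  then show ?thesis
    using assms by (simp add: integral_sum measure_distr)
qed

lemma preimage_symdiff_Diff_UN_subset:
  "preimage_symdiff \<nu> P Q (\<Omega> - (\<Union>j\<in>J. \<Lambda> j))
    \<subseteq> preimage_symdiff \<nu> P Q \<Omega> \<union> (\<Union>j\<in>J. preimage_symdiff \<nu> P Q (\<Lambda> j))"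
  unfolding preimage_symdiff_def by blast

lemma measure_preimage_symdiff_Diff_UN_le:
  assumes "finite_measure \<nu>" "P \<in> borel_measurable \<nu>" "Q \<in> borel_measurable \<nu>" "finite J"
    and "\<Omega> \<in> sets borel" "\<And>j. j \<in> J \<Longrightarrow> \<Lambda> j \<in> sets borel"
  shows "measure \<nu> (preimage_symdiff \<nu> P Q (\<Omega> - (\<Union>j\<in>J. \<Lambda> j)))
    \<le> measure \<nu> (preimage_symdiff \<nu> P Q \<Omega>) + (\<Sum>j\<in>J. measure \<nu> (preimage_symdiff \<nu> P Q (\<Lambda> j)))"
proof -
  have sets: "preimage_symdiff \<nu> P Q \<Omega> \<in> sets \<nu>" "\<And>j. j \<in> J \<Longrightarrow> preimage_symdiff \<nu> P Q (\<Lambda> j) \<in> sets \<nu>"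
    using assms by (auto intro: sets_preimage_symdiff)
  have "measure \<nu> (preimage_symdiff \<nu> P Q (\<Omega> - (\<Union>j\<in>J. \<Lambda> j)))
      \<le> measure \<nu> (preimage_symdiff \<nu> P Q \<Omega> \<union> (\<Union>j\<in>J. preimage_symdiff \<nu> P Q (\<Lambda> j)))"
    using assms sets
    by (intro finite_measure.finite_measure_mono preimage_symdiff_Diff_UN_subset) auto
  also have "\<dots> \<le> measure \<nu> (preimage_symdiff \<nu> P Q \<Omega>) + measure \<nu> (\<Union>j\<in>J. preimage_symdiff \<nu> P Q (\<Lambda> j))"
    using assms sets by (intro measure_Un_le) auto
  also have "\<dots> \<le> measure \<nu> (preimage_symdiff \<nu> P Q \<Omega>) + (\<Sum>j\<in>J. measure \<nu> (preimage_symdiff \<nu> P Q (\<Lambda> j)))"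
    using assms sets by (intro add_left_mono measure_UNION_le) auto
  finally show ?thesis .
qed

lemma abs_integral_distr_cutout_diff_le:
  fixes a r :: real
  assumes "finite_measure \<nu>" "P \<in> borel_measurable \<nu>" "Q \<in> borel_measurable \<nu>" "finite J"
    and "\<Omega> \<in> sets borel" "\<And>j. j \<in> J \<Longrightarrow> \<Lambda> j \<in> sets borel"
    and "measure \<nu> (preimage_symdiff \<nu> P Q \<Omega>) \<le> r"
    and "\<And>j. j \<in> J \<Longrightarrow> measure \<nu> (preimage_symdiff \<nu> P Q (\<Lambda> j)) \<le> r"
    and "0 \<le> a"
  defines "A \<equiv> \<Omega> - (\<Union>j\<in>J. \<Lambda> j)"
  shows "\<bar>integral\<^sup>L (distr \<nu> borel P) (\<lambda>x. a * indicator A x)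
      - integral\<^sup>L (distr \<nu> borel Q) (\<lambda>x. a * indicator A x)\<bar> \<le> a * ((1 + card J) * r)"
proof -
  have "A \<in> sets borel"
    unfolding A_def using assms by (intro sets.Diff sets.finite_UN) auto
  then have "\<bar>integral\<^sup>L (distr \<nu> borel P) (\<lambda>x. a * indicator A x)
      - integral\<^sup>L (distr \<nu> borel Q) (\<lambda>x. a * indicator A x)\<bar> \<le> a * measure \<nu> (preimage_symdiff \<nu> P Q A)"
    using assms abs_integral_distr_indicator_diff_le[of \<nu> P Q A]
    by (simp add: abs_mult right_diff_distrib[symmetric] mult_left_mono)
  also have "\<dots> \<le> a * (r + (\<Sum>j\<in>J. r))"
  proof (intro mult_left_mono)
    have "(\<Sum>j\<in>J. measure \<nu> (preimage_symdiff \<nu> P Q (\<Lambda> j))) \<le> (\<Sum>j\<in>J. r)"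
      using assms by (intro sum_mono) auto
    then show "measure \<nu> (preimage_symdiff \<nu> P Q A) \<le> r + (\<Sum>j\<in>J. r)"
      using measure_preimage_symdiff_Diff_UN_le[of \<nu> P Q J \<Omega> \<Lambda>, OF assms(1-6)] assms(7) unfolding A_def by linarith
  qed (fact \<open>0 \<le> a\<close>)
  finally show ?thesis
    by (simp add: algebra_simps)
qed

lemma abs_integral_distr_weighted_indicators_diff_le:
  fixes c :: "'i \<Rightarrow> real" and b r :: real
  assumes "finite_measure \<nu>" "P \<in> borel_measurable \<nu>" "Q \<in> borel_measurable \<nu>"
    and "\<And>j. j \<in> J \<Longrightarrow> F j \<in> sets borel"
    and "\<And>j. j \<in> J \<Longrightarrow> measure \<nu> (preimage_symdiff \<nu> P Q (F j)) \<le> r"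
    and "\<And>j. j \<in> J \<Longrightarrow> \<bar>c j\<bar> \<le> b"
  shows "\<bar>integral\<^sup>L (distr \<nu> borel P) (\<lambda>x. \<Sum>j\<in>J. c j * indicator (F j) x)
      - integral\<^sup>L (distr \<nu> borel Q) (\<lambda>x. \<Sum>j\<in>J. c j * indicator (F j) x)\<bar> \<le> card J * (b * r)"
proof -
  let ?m = "\<lambda>P j. measure \<nu> (P -` F j \<inter> space \<nu>)"
  have "\<bar>integral\<^sup>L (distr \<nu> borel P) (\<lambda>x. \<Sum>j\<in>J. c j * indicator (F j) x)
      - integral\<^sup>L (distr \<nu> borel Q) (\<lambda>x. \<Sum>j\<in>J. c j * indicator (F j) x)\<bar>
      = \<bar>\<Sum>j\<in>J. c j * (?m P j - ?m Q j)\<bar>"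
    using assms by (simp add: integral_distr_weighted_indicators sum_subtractf right_diff_distrib)
  also have "\<dots> \<le> (\<Sum>j\<in>J. \<bar>c j\<bar> * \<bar>?m P j - ?m Q j\<bar>)"
    unfolding abs_mult[symmetric] by (rule sum_abs)
  also have "\<dots> \<le> (\<Sum>j\<in>J. b * r)"
  proof (rule sum_mono)
    fix j assume "j \<in> J"
    moreover have "\<bar>?m P j - ?m Q j\<bar> \<le> measure \<nu> (preimage_symdiff \<nu> P Q (F j))"
      using \<open>j \<in> J\<close> assms
      by (metis abs_integral_distr_indicator_diff_le integral_distr_indicator)
    ultimately show "\<bar>c j\<bar> * \<bar>?m P j - ?m Q j\<bar> \<le> b * r"
      using assms(5,6)[OF \<open>j \<in> J\<close>] by (intro mult_mono) (auto intro: order_trans[OF abs_ge_zero])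
  qed
  finally show ?thesis
    by simp
qed

lemma cutout_type_pushforward_integral_diff_le:
  fixes mu :: "nat \<Rightarrow> 'w \<Rightarrow> 'a::topological_space \<Rightarrow> real" and Proj :: "'g \<Rightarrow> 'm \<Rightarrow> 'a"
    and \<rho> :: "'g \<Rightarrow> 'g \<Rightarrow> real"
  assumes cutout: "cutout_type M F \<tau> \<zeta> mu N0" and F_borel: "F \<subseteq> sets borel" and \<zeta>: "0 \<le> \<zeta>"
    and \<nu>_finite: "finite_measure \<nu>" and Proj_meas: "\<And>t. Proj t \<in> borel_measurable \<nu>"
    and \<rho>_nonneg: "\<And>t u. 0 \<le> \<rho> t u"
    and symdiff: "\<And>\<Lambda> t u. \<Lambda> \<in> F \<Longrightarrow> measure \<nu> (preimage_symdiff \<nu> (Proj t) (Proj u) \<Lambda>) \<le> \<rho> t u"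
  shows "\<exists>K. AE \<omega> in M. \<forall>t u n. N0 \<omega> \<le> n \<longrightarrow>
    \<bar>integral\<^sup>L (distr \<nu> borel (Proj t)) (mu n \<omega>) - integral\<^sup>L (distr \<nu> borel (Proj u)) (mu n \<omega>)\<bar>
      \<le> K * (2 powr ((\<tau> + \<zeta>) * real n) * \<rho> t u)"
proof -
  obtain C0 \<Omega> Lam Mn where \<Omega>: "\<Omega> \<in> F"
    and rep: "\<forall>n. \<forall>\<omega>\<in>space M. (\<forall>j\<in>{1..Mn n \<omega>}. Lam n \<omega> j \<in> F) \<and>
      mu n \<omega> = (\<lambda>x. 2 powr (\<tau> * real n) * indicator (\<Omega> - (\<Union>j\<in>{1..Mn n \<omega>}. Lam n \<omega> j)) x)"
    and count: "AE \<omega> in M. \<forall>n\<ge>N0 \<omega>. real (Mn n \<omega>) \<le> C0 * 2 powr (\<zeta> * real n)"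
    using cutout unfolding cutout_type_def by blast
  have "AE \<omega> in M. \<forall>t u n. N0 \<omega> \<le> n \<longrightarrow>
    \<bar>integral\<^sup>L (distr \<nu> borel (Proj t)) (mu n \<omega>) - integral\<^sup>L (distr \<nu> borel (Proj u)) (mu n \<omega>)\<bar>
      \<le> (1 + C0) * (2 powr ((\<tau> + \<zeta>) * real n) * \<rho> t u)"
    using count AE_space
  proof eventually_elim
    case (elim \<omega>)
    show ?case
    proof (intro allI impI)
      fix t u n
      assume "N0 \<omega> \<le> n"
      then have card: "real (card {1..Mn n \<omega>}) \<le> C0 * 2 powr (\<zeta> * real n)"
        using elim by simp
      have one_le: "1 \<le> 2 powr (\<zeta> * real n)"
        using \<zeta> by (intro ge_one_powr_ge_zero) auto
      have Lam: "\<And>j. j \<in> {1..Mn n \<omega>} \<Longrightarrow> Lam n \<omega> j \<in> F"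
        and mu: "mu n \<omega> = (\<lambda>x. 2 powr (\<tau> * real n) * indicator (\<Omega> - (\<Union>j\<in>{1..Mn n \<omega>}. Lam n \<omega> j)) x)"
        using rep elim by auto
      have "\<bar>integral\<^sup>L (distr \<nu> borel (Proj t)) (mu n \<omega>) - integral\<^sup>L (distr \<nu> borel (Proj u)) (mu n \<omega>)\<bar>
          \<le> 2 powr (\<tau> * real n) * ((1 + card {1..Mn n \<omega>}) * \<rho> t u)"
        unfolding mu using \<Omega> Lam F_borel
        by (intro abs_integral_distr_cutout_diff_le \<nu>_finite Proj_meas symdiff) auto
      also have "\<dots> \<le> 2 powr (\<tau> * real n) * ((1 + C0) * 2 powr (\<zeta> * real n) * \<rho> t u)"
        using card one_le \<rho>_nonneg by (intro mult_left_mono mult_right_mono) (auto simp: algebra_simps)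
      also have "\<dots> = (1 + C0) * (2 powr ((\<tau> + \<zeta>) * real n) * \<rho> t u)"
        by (simp add: distrib_right powr_add algebra_simps)
      finally show "\<bar>integral\<^sup>L (distr \<nu> borel (Proj t)) (mu n \<omega>) - integral\<^sup>L (distr \<nu> borel (Proj u)) (mu n \<omega>)\<bar>
          \<le> (1 + C0) * (2 powr ((\<tau> + \<zeta>) * real n) * \<rho> t u)" .
    qed
  qed
  then show ?thesis
    by blast
qed

lemma cell_type_pushforward_integral_diff_le:
  fixes mu :: "nat \<Rightarrow> 'w \<Rightarrow> 'a::topological_space \<Rightarrow> real" and Proj :: "'g \<Rightarrow> 'm \<Rightarrow> 'a"
    and \<rho> :: "'g \<Rightarrow> 'g \<Rightarrow> real"
  assumes cell: "cell_type M F \<tau> \<zeta> mu N0" and F_borel: "F \<subseteq> sets borel"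
    and \<nu>_finite: "finite_measure \<nu>" and Proj_meas: "\<And>t. Proj t \<in> borel_measurable \<nu>"
    and \<rho>_nonneg: "\<And>t u. 0 \<le> \<rho> t u"
    and symdiff: "\<And>\<Lambda> t u. \<Lambda> \<in> F \<Longrightarrow> measure \<nu> (preimage_symdiff \<nu> (Proj t) (Proj u) \<Lambda>) \<le> \<rho> t u"
  shows "\<exists>K. AE \<omega> in M. \<forall>t u n. N0 \<omega> \<le> n \<longrightarrow>
    \<bar>integral\<^sup>L (distr \<nu> borel (Proj t)) (mu n \<omega>) - integral\<^sup>L (distr \<nu> borel (Proj u)) (mu n \<omega>)\<bar>
      \<le> K * (2 powr ((\<tau> + \<zeta>) * real n) * \<rho> t u)"
proof -
  obtain C0 Fm c Mn where C0: "0 < C0"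
    and rep: "\<forall>n. \<forall>\<omega>\<in>space M. (\<forall>j\<in>{1..Mn n \<omega>}. Fm n \<omega> j \<in> F) \<and>
      mu n \<omega> = (\<lambda>x. \<Sum>j\<in>{1..Mn n \<omega>}. c n \<omega> j * indicator (Fm n \<omega> j) x)"
    and weights: "AE \<omega> in M. \<forall>n j. 0 \<le> c n \<omega> j \<and> c n \<omega> j \<le> C0 * 2 powr (\<tau> * real n)"
    and count: "AE \<omega> in M. \<forall>n\<ge>N0 \<omega>. real (Mn n \<omega>) \<le> C0 * 2 powr (\<zeta> * real n)"
    using cell unfolding cell_type_def by blast
  have "AE \<omega> in M. \<forall>t u n. N0 \<omega> \<le> n \<longrightarrow>
    \<bar>integral\<^sup>L (distr \<nu> borel (Proj t)) (mu n \<omega>) - integral\<^sup>L (distr \<nu> borel (Proj u)) (mu n \<omega>)\<bar>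
      \<le> C0\<^sup>2 * (2 powr ((\<tau> + \<zeta>) * real n) * \<rho> t u)"
    using weights count AE_space
  proof eventually_elim
    case (elim \<omega>)
    show ?case
    proof (intro allI impI)
      fix t u n
      assume "N0 \<omega> \<le> n"
      then have card: "real (card {1..Mn n \<omega>}) \<le> C0 * 2 powr (\<zeta> * real n)"
        using elim by simp
      have Fm: "\<And>j. j \<in> {1..Mn n \<omega>} \<Longrightarrow> Fm n \<omega> j \<in> F"
        and mu: "mu n \<omega> = (\<lambda>x. \<Sum>j\<in>{1..Mn n \<omega>}. c n \<omega> j * indicator (Fm n \<omega> j) x)"
        using rep elim by auto
      have "\<bar>integral\<^sup>L (distr \<nu> borel (Proj t)) (mu n \<omega>) - integral\<^sup>L (distr \<nu> borel (Proj u)) (mu n \<omega>)\<bar>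
          \<le> card {1..Mn n \<omega>} * (C0 * 2 powr (\<tau> * real n) * \<rho> t u)"
        unfolding mu using Fm F_borel elim
        by (intro abs_integral_distr_weighted_indicators_diff_le \<nu>_finite Proj_meas symdiff) auto
      also have "\<dots> \<le> C0 * 2 powr (\<zeta> * real n) * (C0 * 2 powr (\<tau> * real n) * \<rho> t u)"
        using card C0 \<rho>_nonneg by (intro mult_right_mono) auto
      also have "\<dots> = C0\<^sup>2 * (2 powr ((\<tau> + \<zeta>) * real n) * \<rho> t u)"
        by (simp add: distrib_right powr_add power2_eq_square algebra_simps)
      finally show "\<bar>integral\<^sup>L (distr \<nu> borel (Proj t)) (mu n \<omega>) - integral\<^sup>L (distr \<nu> borel (Proj u)) (mu n \<omega>)\<bar>
          \<le> C0\<^sup>2 * (2 powr ((\<tau> + \<zeta>) * real n) * \<rho> t u)" .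
    qed
  qed
  then show ?thesis
    by blast
qed

theorem proposition6p1:
  fixes M :: "'w measure" and B :: "nat \<Rightarrow> 'w measure"
    and mu :: "nat \<Rightarrow> 'w \<Rightarrow> 'a::euclidean_space \<Rightarrow> real"
    and F :: "'a set set" and R \<tau> \<zeta> :: real and N0 :: "'w \<Rightarrow> nat"
    and \<nu> :: "'m::metric_space measure"
    and Proj :: "'g::metric_space \<Rightarrow> 'm \<Rightarrow> 'a"
    and \<gamma>\<^sub>0 C :: real
  assumes SI: "SI_martingale M B mu"
    and F_borel: "F \<subseteq> sets borel" and F_ball: "\<forall>\<Lambda>\<in>F. \<Lambda> \<subseteq> ball 0 R"
    and \<tau>: "0 < \<tau>" and \<zeta>: "0 < \<zeta>"
    and type: "cutout_type M F \<tau> \<zeta> mu N0 \<or> cell_type M F \<tau> \<zeta> mu N0"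
    and \<nu>_borel: "sets \<nu> = sets borel" and \<nu>_finite: "finite_measure \<nu>"
    and Proj_meas: "\<forall>t. Proj t \<in> borel_measurable \<nu>"
    and \<gamma>\<^sub>0: "0 < \<gamma>\<^sub>0" and C: "0 < C"
    and symdiff: "\<forall>\<Lambda>\<in>F. \<forall>t u.
       measure \<nu> ((Proj t -` \<Lambda> \<inter> space \<nu> - Proj u -` \<Lambda>) \<union> (Proj u -` \<Lambda> \<inter> space \<nu> - Proj t -` \<Lambda>))
         \<le> C * dist t u powr \<gamma>\<^sub>0"
  shows "\<exists>C'. AE \<omega> in M. \<forall>t u n. t \<noteq> u \<longrightarrow> N0 \<omega> \<le> n \<longrightarrow>
           \<bar>integral\<^sup>L (distr \<nu> borel (Proj t)) (mu n \<omega>) - integral\<^sup>L (distr \<nu> borel (Proj u)) (mu n \<omega>)\<bar>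
             / (2 powr ((\<tau> + \<zeta>) * real n) * dist t u powr \<gamma>\<^sub>0) \<le> C'"
proof -
  have symdiff': "\<And>\<Lambda> t u. \<Lambda> \<in> F \<Longrightarrow>
      measure \<nu> (preimage_symdiff \<nu> (Proj t) (Proj u) \<Lambda>) \<le> C * dist t u powr \<gamma>\<^sub>0"
    using symdiff unfolding preimage_symdiff_def by blast
  have "\<exists>K. AE \<omega> in M. \<forall>t u n. N0 \<omega> \<le> n \<longrightarrow>
      \<bar>integral\<^sup>L (distr \<nu> borel (Proj t)) (mu n \<omega>) - integral\<^sup>L (distr \<nu> borel (Proj u)) (mu n \<omega>)\<bar>
        \<le> K * (2 powr ((\<tau> + \<zeta>) * real n) * (C * dist t u powr \<gamma>\<^sub>0))"
    (is "\<exists>K. ?bound K")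
    using type
  proof
    assume "cutout_type M F \<tau> \<zeta> mu N0"
    then show ?thesis
      by (rule cutout_type_pushforward_integral_diff_le) (use F_borel \<zeta> \<nu>_finite Proj_meas symdiff' C in auto)
  next
    assume "cell_type M F \<tau> \<zeta> mu N0"
    then show ?thesis
      by (rule cell_type_pushforward_integral_diff_le) (use F_borel \<nu>_finite Proj_meas symdiff' C in auto)
  qed
  then obtain K where "?bound K"
    by blast
  then show ?thesis
    by (intro exI[of _ "K * C"], eventually_elim) (simp add: pos_divide_le_eq mult_ac)
qed

end
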